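(* (Perfect completeness.) Consider the card-based Makaro protocol described in the context. If the prover $P$ knows a solution of the given Makaro puzzle and places the cell cards according to it, and the protocol is executed as specified, then the verifier $V$ always accepts.
   Context: Makaro puzzle: a rectangular grid of white and black cells. The white cells are partitioned into polyominoes called rooms; the size of a room is its number of cells. Some white cells already contain a number. Each black cell contains an arrow pointing to one of its (horizontally or vertically) adjacent white cells. A solution assigns a number to every empty white cell such that: (room condition) each room of size $p$ contains exactly the numbers $1,2,\dots,p$; (neighbor condition) two orthogonally adjacent white cells in different rooms contain different numbers; (arrow condition) for each black cell, the white cell its arrow points to contains the unique largest number among the (up to four) numbers in the white cells orthogonally adjacent to that black cell. Let $k$ be the size of the largest room. Cards: all cards have distinct front faces and identical backs. For each room $R$ of size $p$ there are cell cards $R_1,\dots,R_p$ (cards of different rooms are all distinct); there are helping cards $h_1,\dots,h_k$ and encoding cards $a_i,b_i,c_i,d_i$ for $i=1,\dots,2k-1$. A pile-scramble shuffle applied to a matrix of face-down cards permutes its columns by a uniformly random permutation unknown to all parties; a pile-shifting shuffle permutes the columns by a uniformly random cyclic shift unknown to all parties. Protocol. Setup: on each white cell of room $R$ containing (or, for empty cells, secretly assigned by $P$) the number $v$, $P$ places the face-down card $R_v$ (publicly for prefilled cells, secretly for the others). Room check, for each room $R$ of size $p$: put its cell cards in a fixed order in Row 1 of a $2\times p$ matrix and $h_1,\dots,h_p$ in Row 2; pile-scramble; reveal Row 1 and reject unless it is a permutation of $R_1,\dots,R_p$; turn these cards face down, pile-scramble again, reveal Row 2, rearrange the columns so Row 2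 reads $h_1,\dots,h_p$, and return the Row 1 cards to their cells. Conversion (cell with card $R_x$ in room $R$ of size $p$, target length $m\ge p$, card set $X\in\{a,b,c,d\}$): put the cell cards of $R$ in a fixed order in Row 1 of a matrix, with $R_x$ in column $i$; $h_1,\dots,h_p$ in Row 2; $X_1$ in Row 3, column $i$; $P$ secretly forms a uniformly random permutation $S$ of $X_2,\dots,X_m$ and fills the remaining $p-1$ cells of Row 3 from left to right with the first $p-1$ cards of $S$. Pile-scramble the $3\times p$ matrix; reveal Row 1 and rearrange columns so Row 1 reads $R_1,\dots,R_p$; remove Row 3 as a sequence $T$ and append the remaining $m-p$ cards of $S$ to obtain a face-down sequence of length $m$ (the encoding sequence). Then turn Row 1 face down, pile-scramble, reveal Row 2, rearrange so it reads $h_1,\dots,h_p$, and return the cell cards to their cells. Neighbor check, for each pair of adjacent white cells in different rooms (room sizes $p,q$, $m=\max(p,q)$): convert the first cell with set $a$ and the second with set $b$, both with length $m$; place the two sequences as Rows 1 and 2 of a $2\times m$ matrix; pile-scramble; reveal Row 1; let $a_1$ be in column $i$; reveal the Row 2 card in column $i$ and reject if it is $b_1$. Arrow check, for each black cell: let the pointed-to cell and the other (up to three) adjacent white cells be considered, and let $m$ be the maximum room size among them; convert the pointed-to cell with set $a$ and the others with sets $b,c,d$, all with length $2m-1$; place them as rows of a matrix (Row 1 from set $a$); apply a pile-shifting shuffle; reveal Row 1, let $a_1$ be in column $i$; reveal the cards of the other rows in columns $i,i+1,\dots,i+m-1$ (indices modulo $2m-1$) and reject if any of them is $b_1$, $c_1$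 or $d_1$. $V$ accepts if no check rejects. *)

theory Defs
  imports "HOL-Combinatorics.Permutations" "HOL-Library.Multiset"
begin

type_synonym pos = "nat \<times> nat"

definition adj :: "pos \<Rightarrow> pos \<Rightarrow> bool" where
  "adj p q \<longleftrightarrow>
     (fst p = fst q \<and> (snd p = snd q + 1 \<or> snd q = snd p + 1)) \<or>
     (snd p = snd q \<and> (fst p = fst q + 1 \<or> fst q = fst p + 1))"

definition polyomino :: "pos set \<Rightarrow> bool" where
  "polyomino R \<longleftrightarrow> R \<noteq> {} \<and>
     (\<forall>c\<in>R. \<forall>c'\<in>R. (\<lambda>x y. x \<in> R \<and> y \<in> R \<and> adj x y)\<^sup>*\<^sup>* c c')"

text \<open>A Makaro puzzle on an nr x nc grid: white cells W, black cells Bk,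
  rooms (a partition of W into polyominoes), prefilled numbers 'given',
  and for each black cell the white cell its arrow points to.\<close>
definition makaro_puzzle ::
  "nat \<Rightarrow> nat \<Rightarrow> pos set \<Rightarrow> pos set \<Rightarrow> pos set set \<Rightarrow> (pos \<Rightarrow> nat option) \<Rightarrow> (pos \<Rightarrow> pos) \<Rightarrow> bool"
where
  "makaro_puzzle nr nc W Bk rooms given arrow \<longleftrightarrow>
     W \<inter> Bk = {} \<and> W \<union> Bk = {..<nr} \<times> {..<nc} \<and>
     \<Union> rooms = W \<and>
     (\<forall>R\<in>rooms. polyomino R) \<and>
     (\<forall>R\<in>rooms. \<forall>R'\<in>rooms. R \<noteq> R' \<longrightarrow> R \<inter> R' = {}) \<and>
     (\<forall>c. given c \<noteq> None \<longrightarrow> c \<in> W) \<and>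
     (\<forall>b\<in>Bk. arrow b \<in> W \<and> adj b (arrow b))"

definition room_of :: "pos set set \<Rightarrow> pos \<Rightarrow> pos set" where
  "room_of rooms c = (THE R. R \<in> rooms \<and> c \<in> R)"

definition same_room :: "pos set set \<Rightarrow> pos \<Rightarrow> pos \<Rightarrow> bool" where
  "same_room rooms c c' \<longleftrightarrow> (\<exists>R\<in>rooms. c \<in> R \<and> c' \<in> R)"

definition makaro_solution ::
  "pos set \<Rightarrow> pos set \<Rightarrow> pos set set \<Rightarrow> (pos \<Rightarrow> nat option) \<Rightarrow> (pos \<Rightarrow> pos) \<Rightarrow> (pos \<Rightarrow> nat) \<Rightarrow> bool"
where
  "makaro_solution W Bk rooms given arrow sol \<longleftrightarrow>
     \<comment> \<open>room condition\<close>
     (\<forall>R\<in>rooms. sol ` R = {1..card R}) \<and>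
     \<comment> \<open>agrees with the prefilled numbers\<close>
     (\<forall>c v. given c = Some v \<longrightarrow> sol c = v) \<and>
     \<comment> \<open>neighbor condition\<close>
     (\<forall>c\<in>W. \<forall>c'\<in>W. adj c c' \<and> \<not> same_room rooms c c' \<longrightarrow> sol c \<noteq> sol c') \<and>
     \<comment> \<open>arrow condition: the pointed cell holds the unique largest number\<close>
     (\<forall>b\<in>Bk. \<forall>c\<in>W. adj b c \<and> c \<noteq> arrow b \<longrightarrow> sol c < sol (arrow b))"

datatype letter = LA | LB | LC | LD

datatype card =
    CellC "pos set" nat
  | Hlp nat
  | Enc letter nat

type_synonym layout = "pos \<Rightarrow> card"

definition cell_cards :: "pos set \<Rightarrow> card list" where
  "cell_cards R = map (CellC R) [1..<card R + 1]"

definition hlp_cards :: "nat \<Rightarrow> card list" where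
  "hlp_cards p = map Hlp [1..<p + 1]"

definition enc_cards :: "letter \<Rightarrow> nat \<Rightarrow> nat \<Rightarrow> card list" where
  "enc_cards X i j = map (Enc X) [i..<j + 1]"

definition idx :: "'a list \<Rightarrow> 'a \<Rightarrow> nat" where
  "idx r c = (LEAST j. j < length r \<and> r ! j = c)"

text \<open>After revealing row r, rearrange the columns so that r reads t; applied to
  any row of the matrix.\<close>
definition rearr :: "'a list \<Rightarrow> 'a list \<Rightarrow> 'b list \<Rightarrow> 'b list" where
  "rearr r t row = map (\<lambda>c. row ! idx r c) t"

definition perms :: "nat \<Rightarrow> (nat \<Rightarrow> nat) set" where
  "perms n = {\<pi>. \<pi> permutes {..<n}}"

definition put_back :: "layout \<Rightarrow> pos list \<Rightarrow> card list \<Rightarrow> layout" where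
  "put_back L cs vs = (\<lambda>c. if c \<in> set cs then vs ! idx cs c else L c)"

text \<open>Sequential composition of nondeterministic (set-valued) checks;
  None means rejection.\<close>
fun run_seq :: "('a \<Rightarrow> layout \<Rightarrow> layout option set) \<Rightarrow> 'a list \<Rightarrow> layout \<Rightarrow> layout option set" where
  "run_seq f [] L = {Some L}"
| "run_seq f (x # xs) L =
     (\<Union>o' \<in> f x L. case o' of None \<Rightarrow> {None} | Some L' \<Rightarrow> run_seq f xs L')"

text \<open>Room check for room R (ord R is the fixed order of its cells).\<close>
definition room_check :: "(pos set \<Rightarrow> pos list) \<Rightarrow> pos set \<Rightarrow> layout \<Rightarrow> layout option set" where
  "room_check ord R L =
    (let p = card R; cs = ord R; row1 = map L cs; row2 = hlp_cards p in
     \<Union>\<pi>1 \<in> perms p.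
       let r1 = permute_list \<pi>1 row1; r2 = permute_list \<pi>1 row2 in
       if mset r1 \<noteq> mset (cell_cards R) then {None}
       else \<Union>\<pi>2 \<in> perms p.
         let s1 = permute_list \<pi>2 r1; s2 = permute_list \<pi>2 r2;
             f1 = rearr s2 (hlp_cards p) s1
         in {Some (put_back L cs f1)})"

text \<open>Conversion of cell c of room R to an encoding sequence of length m using
  card set X.  Returns the encoding sequence and the new layout.\<close>
definition convert ::
  "(pos set \<Rightarrow> pos list) \<Rightarrow> pos set \<Rightarrow> pos \<Rightarrow> nat \<Rightarrow> letter \<Rightarrow> layout \<Rightarrow> (card list \<times> layout) set"
where
  "convert ord R c m X L =
    (let p = card R; cs = ord R; i = idx cs c; row1 = map L cs; row2 = hlp_cards p in
     \<Union>S \<in> {S. mset S = mset (enc_cards X 2 m)}.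
       let row3 = take i S @ [Enc X 1] @ drop i (take (p - 1) S) in
       \<Union>\<sigma>1 \<in> perms p.
         let r1 = permute_list \<sigma>1 row1; r2 = permute_list \<sigma>1 row2; r3 = permute_list \<sigma>1 row3;
             u1 = rearr r1 (cell_cards R) r1; u2 = rearr r1 (cell_cards R) r2;
             T = rearr r1 (cell_cards R) r3;
             e = T @ drop (p - 1) S
         in \<Union>\<sigma>2 \<in> perms p.
           let v1 = permute_list \<sigma>2 u1; v2 = permute_list \<sigma>2 u2;
               w1 = rearr v2 (hlp_cards p) v1
           in {(e, put_back L cs w1)})"

definition neighbor_check ::
  "pos set set \<Rightarrow> (pos set \<Rightarrow> pos list) \<Rightarrow> pos \<times> pos \<Rightarrow> layout \<Rightarrow> layout option set"
where
  "neighbor_check rooms ord cc L =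
    (let c1 = fst cc; c2 = snd cc; R1 = room_of rooms c1; R2 = room_of rooms c2;
         m = max (card R1) (card R2) in
     \<Union>(e1, L1) \<in> convert ord R1 c1 m LA L.
     \<Union>(e2, L2) \<in> convert ord R2 c2 m LB L1.
     \<Union>\<tau> \<in> perms m.
       let f1 = permute_list \<tau> e1; f2 = permute_list \<tau> e2; i = idx f1 (Enc LA 1) in
       if f2 ! i = Enc LB 1 then {None} else {Some L2})"

fun convert_list ::
  "pos set set \<Rightarrow> (pos set \<Rightarrow> pos list) \<Rightarrow> nat \<Rightarrow> (pos \<times> letter) list \<Rightarrow> layout \<Rightarrow> (card list list \<times> layout) set"
where
  "convert_list rooms ord m [] L = {([], L)}"
| "convert_list rooms ord m ((c, X) # cs) L =
     (\<Union>(e, L1) \<in> convert ord (room_of rooms c) c m X L.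
      \<Union>(es, L2) \<in> convert_list rooms ord m cs L1. {(e # es, L2)})"

text \<open>Arrow check for black cell b; oth b lists the other adjacent white cells.\<close>
definition arrow_check ::
  "pos set set \<Rightarrow> (pos set \<Rightarrow> pos list) \<Rightarrow> (pos \<Rightarrow> pos) \<Rightarrow> (pos \<Rightarrow> pos list) \<Rightarrow> pos \<Rightarrow> layout \<Rightarrow> layout option set"
where
  "arrow_check rooms ord arrow oth b L =
    (let t = arrow b; os = oth b;
         m = Max ((\<lambda>c. card (room_of rooms c)) ` set (t # os)); n = 2 * m - 1 in
     \<Union>(e1, L1) \<in> convert ord (room_of rooms t) t n LA L.
     \<Union>(es, L2) \<in> convert_list rooms ord n (zip os [LB, LC, LD]) L1.
     \<Union>r \<in> {..<n}.
       let f1 = rotate r e1; fs = map (rotate r) es; i = idx f1 (Enc LA 1) in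
       if (\<exists>f \<in> set fs. \<exists>j<m. f ! ((i + j) mod n) \<in> {Enc LB 1, Enc LC 1, Enc LD 1})
       then {None} else {Some L2})"

definition setup_layout :: "pos set set \<Rightarrow> (pos \<Rightarrow> nat) \<Rightarrow> layout" where
  "setup_layout rooms sol = (\<lambda>c. CellC (room_of rooms c) (sol c))"

text \<open>All possible outcomes of the whole protocol (over all shuffle results and
  all random choices of P); None = some check rejected.\<close>
definition protocol ::
  "pos set set \<Rightarrow> (pos \<Rightarrow> pos) \<Rightarrow> (pos set \<Rightarrow> pos list) \<Rightarrow> (pos \<Rightarrow> pos list)
   \<Rightarrow> pos set list \<Rightarrow> (pos \<times> pos) list \<Rightarrow> pos list \<Rightarrow> layout \<Rightarrow> layout option set"
where
  "protocol rooms arrow ord oth rl np bl L0 =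
    (\<Union>o1 \<in> run_seq (room_check ord) rl L0.
      case o1 of None \<Rightarrow> {None} | Some L1 \<Rightarrow>
      (\<Union>o2 \<in> run_seq (neighbor_check rooms ord) np L1.
        case o2 of None \<Rightarrow> {None} | Some L2 \<Rightarrow>
        run_seq (arrow_check rooms ord arrow oth) bl L2))"

end

theory Submission
  imports Defs
begin

text \<open>Every pile-scramble in the protocol is followed by revealing a row of known cards and
  sorting the columns back, which undoes the shuffle; so all cards return to their cells and every
  conversion of a cell with number \<open>v\<close> yields a permutation of \<open>X\<^sub>1, ..., X\<^sub>m\<close> with
  \<open>X\<^sub>1\<close> at position \<open>v\<close>. In the neighbour check the two sequences are shuffled by the same
  permutation, so the card under \<open>a\<^sub>1\<close> is \<open>b\<^sub>1\<close> only if both cells carry the same number.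
  In the arrow check, after the common cyclic shift the revealed window covers positions
  \<open>v, ..., v + m - 1\<close> of length \<open>2m - 1\<close> sequences, which never wrap around, so it cannot
  contain the first card of a neighbour whose number is smaller than \<open>v\<close>.\<close>

lemma idx_less: "x \<in> set r \<Longrightarrow> idx r x < length r"
  unfolding idx_def by (rule LeastI2_ex) (auto simp: in_set_conv_nth)

lemma nth_idx: "x \<in> set r \<Longrightarrow> r ! idx r x = x"
  unfolding idx_def by (rule LeastI2_ex) (auto simp: in_set_conv_nth)

lemma idx_nth: "distinct r \<Longrightarrow> j < length r \<Longrightarrow> idx r (r ! j) = j"
  by (metis idx_less nth_idx nth_eq_iff_index_eq nth_mem)

lemma idx_permute_list:
  assumes \<pi>: "\<pi> permutes {..<length r}" and "distinct r" "x \<in> set r"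
  shows "idx (permute_list \<pi> r) x = inv \<pi> (idx r x)"
proof -
  have i: "inv \<pi> (idx r x) < length r"
    using idx_less[OF \<open>x \<in> set r\<close>] permutes_in_image[OF permutes_inv[OF \<pi>]] by simp
  then have "permute_list \<pi> r ! inv \<pi> (idx r x) = x"
    by (simp add: permute_list_nth[OF \<pi>] permutes_inverses(1)[OF \<pi>] nth_idx[OF \<open>x \<in> set r\<close>])
  then show ?thesis
    using idx_nth[of "permute_list \<pi> r"] i \<pi> \<open>distinct r\<close> by fastforce
qed

lemma rearr_nth: "k < length t \<Longrightarrow> rearr r t row ! k = row ! idx r (t ! k)"
  by (simp add: rearr_def)

lemma length_rearr [simp]: "length (rearr r t row) = length t"
  by (simp add: rearr_def)

lemma rearr_same: "distinct t \<Longrightarrow> length row = length t \<Longrightarrow> rearr t t row = row"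
  by (rule nth_equalityI) (simp_all add: rearr_nth idx_nth)

text \<open>This is why the pile-scramble shuffles leave no trace.\<close>
lemma rearr_permute_list:
  assumes \<pi>: "\<pi> permutes {..<length r}" and r: "distinct r" and t: "set t \<subseteq> set r"
    and row: "length row = length r"
  shows "rearr (permute_list \<pi> r) t (permute_list \<pi> row) = rearr r t row"
proof (rule nth_equalityI)
  fix k assume "k < length (rearr (permute_list \<pi> r) t (permute_list \<pi> row))"
  then have k: "k < length t" by simp
  then have tk: "t ! k \<in> set r" using t by auto
  have "inv \<pi> (idx r (t ! k)) < length r"
    using idx_less[OF tk] permutes_in_image[OF permutes_inv[OF \<pi>]] by simp
  then show "rearr (permute_list \<pi> r) t (permute_list \<pi> row) ! k = rearr r t row ! k"
    using k row by (simp add: rearr_nth idx_permute_list[OF \<pi> r tk] permute_list_nth \<pi>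
        permutes_inverses(1)[OF \<pi>])
qed simp

definition rearr_perm :: "'a list \<Rightarrow> 'a list \<Rightarrow> nat \<Rightarrow> nat" where
  "rearr_perm r t k = (if k < length r then idx r (t ! k) else k)"

lemma rearr_eq_permute_list:
  assumes "mset r = mset t" and "length row = length r"
  shows "rearr r t row = permute_list (rearr_perm r t) row"
proof -
  have "length t = length r"
    using mset_eq_length[OF assms(1)] by simp
  then show ?thesis
    using assms(2) by (simp add: rearr_def permute_list_def rearr_perm_def map_equality_iff)
qed

lemma rearr_perm_permutes:
  assumes r: "mset r = mset t" and t: "distinct t"
  shows "rearr_perm r t permutes {..<length r}"
proof (rule bij_imp_permutes)
  have len: "length t = length r" and set: "set t = set r"
    using mset_eq_length[OF r] mset_eq_setD[OF r] by simp_all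
  have "rearr_perm r t ` {..<length r} \<subseteq> {..<length r}"
    using set len by (auto simp: rearr_perm_def intro!: idx_less nth_mem)
  moreover have "inj_on (rearr_perm r t) {..<length r}"
  proof (rule inj_onI)
    fix k k' assume "k \<in> {..<length r}" "k' \<in> {..<length r}" "rearr_perm r t k = rearr_perm r t k'"
    then have "r ! idx r (t ! k) = r ! idx r (t ! k')" "k < length t" "k' < length t"
      using len by (auto simp: rearr_perm_def)
    then show "k = k'"
      using t set nth_idx by (metis nth_eq_iff_index_eq nth_mem)
  qed
  ultimately show "bij_betw (rearr_perm r t) {..<length r} {..<length r}"
    by (simp add: bij_betw_def endo_inj_surj)
qed (simp add: rearr_perm_def)

lemma mset_rearr:
  "mset r = mset t \<Longrightarrow> distinct t \<Longrightarrow> length row = length r \<Longrightarrow> mset (rearr r t row) = mset row"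
  by (simp add: rearr_eq_permute_list rearr_perm_permutes)

lemma put_back_map_self: "put_back L cs (map L cs) = L"
  by (auto simp: put_back_def idx_less nth_idx)

lemma run_seq_stationary:
  "(\<And>x. x \<in> set xs \<Longrightarrow> f x L \<subseteq> {Some L}) \<Longrightarrow> run_seq f xs L \<subseteq> {Some L}"
proof (induction xs)
  case (Cons x xs)
  then have "f x L \<subseteq> {Some L}" "run_seq f xs L \<subseteq> {Some L}" by simp_all
  then show ?case by (force split: option.splits)
qed simp

lemma length_cell_cards [simp]: "length (cell_cards R) = card R"
  by (simp add: cell_cards_def)

lemma distinct_cell_cards: "distinct (cell_cards R)"
  by (simp add: cell_cards_def distinct_map inj_on_def del: upt_Suc)

lemma set_cell_cards: "set (cell_cards R) = CellC R ` {1..card R}"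
  by (simp add: cell_cards_def atLeastLessThanSuc_atLeastAtMost del: upt_Suc)

lemma nth_cell_cards: "k < card R \<Longrightarrow> cell_cards R ! k = CellC R (k + 1)"
  by (simp add: cell_cards_def del: upt_Suc)

lemma length_hlp_cards [simp]: "length (hlp_cards p) = p"
  by (simp add: hlp_cards_def)

lemma distinct_hlp_cards: "distinct (hlp_cards p)"
  by (simp add: hlp_cards_def distinct_map inj_on_def del: upt_Suc)

lemma distinct_enc_cards: "distinct (enc_cards X i j)"
  by (simp add: enc_cards_def distinct_map inj_on_def del: upt_Suc)

lemma set_enc_cards: "set (enc_cards X i j) = Enc X ` {i..j}"
  by (simp add: enc_cards_def atLeastLessThanSuc_atLeastAtMost del: upt_Suc)

lemma enc_cards_1: "0 < m \<Longrightarrow> enc_cards X 1 m = Enc X 1 # enc_cards X 2 m"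
  by (simp add: enc_cards_def upt_conv_Cons numeral_2_eq_2 del: upt_Suc)

lemma room_check_accepts:
  assumes cards: "mset (map L (ord R)) = mset (cell_cards R)"
  shows "room_check ord R L \<subseteq> {Some L}"
proof
  define row1 where "row1 = map L (ord R)"
  define row2 where "row2 = hlp_cards (card R)"
  have len: "length row1 = card R"
    using mset_eq_length[OF cards] by (simp add: row1_def)
  fix x assume "x \<in> room_check ord R L"
  then obtain \<pi>1 \<pi>2 where \<pi>1: "\<pi>1 permutes {..<card R}" and \<pi>2: "\<pi>2 permutes {..<card R}"
    and x: "x = Some (put_back L (ord R) (rearr (permute_list \<pi>2 (permute_list \<pi>1 row2)) row2
                (permute_list \<pi>2 (permute_list \<pi>1 row1))))"
    using cards len
    unfolding room_check_def Let_def perms_def row1_def[symmetric] row2_def[symmetric]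
    by (auto split: if_splits)
  have "rearr (permute_list \<pi>2 (permute_list \<pi>1 row2)) row2 (permute_list \<pi>2 (permute_list \<pi>1 row1))
      = rearr row2 row2 row1"
    using \<pi>1 \<pi>2 len distinct_hlp_cards
    by (simp add: rearr_permute_list row2_def)
  also have "\<dots> = row1"
    using len distinct_hlp_cards by (simp add: rearr_same row2_def)
  finally show "x \<in> {Some L}"
    using x by (simp add: row1_def put_back_map_self)
qed

definition encodes :: "letter \<Rightarrow> nat \<Rightarrow> nat \<Rightarrow> card list \<Rightarrow> bool" where
  "encodes X m v e \<longleftrightarrow>
     0 < v \<and> v \<le> m \<and> mset e = mset (enc_cards X 1 m) \<and> e ! (v - 1) = Enc X 1"

lemma encodes_length: "encodes X m v e \<Longrightarrow> length e = m"
  unfolding encodes_def using mset_eq_length[of e "enc_cards X 1 m"]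
  by (simp add: enc_cards_def del: upt_Suc)

lemma encodes_nth_eq_first:
  assumes e: "encodes X m v e" and q: "q < m"
  shows "e ! q = Enc Y 1 \<longleftrightarrow> Y = X \<and> q = v - 1"
proof -
  have "set e = Enc X ` {1..m}" "distinct e"
    using e unfolding encodes_def
    by (metis mset_eq_setD set_enc_cards, metis mset_eq_imp_distinct_iff distinct_enc_cards)
  moreover have "v - 1 < m" "e ! (v - 1) = Enc X 1"
    using e by (auto simp: encodes_def)
  ultimately show ?thesis
    using q encodes_length[OF e] nth_mem[of q e] nth_eq_iff_index_eq by fastforce
qed

lemma mset_take_insert_drop:
  assumes "i \<le> k"
  shows "mset (take i xs @ [x] @ drop i (take k xs)) = add_mset x (mset (take k xs))"
proof -
  have "take i xs @ drop i (take k xs) = take k xs"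
    using assms by (metis append_take_drop_id min_absorb1 take_take)
  then have "mset (take k xs) = mset (take i xs) + mset (drop i (take k xs))"
    by (metis mset_append)
  then show ?thesis
    by simp
qed

lemma convert_unshuffled:
  assumes cards: "mset (map L (ord R)) = mset (cell_cards R)" and c: "c \<in> set (ord R)"
    and m: "card R \<le> m" and conv: "(e, L') \<in> convert ord R c m X L"
  obtains S where "mset S = mset (enc_cards X 2 m)" and "L' = L"
    and "e = rearr (map L (ord R)) (cell_cards R)
               (take (idx (ord R) c) S @ [Enc X 1] @ drop (idx (ord R) c) (take (card R - 1) S))
             @ drop (card R - 1) S"
proof -
  define p where "p = card R"
  define i where "i = idx (ord R) c"
  define row1 where "row1 = map L (ord R)"
  define row2 where "row2 = hlp_cards p"
  define cells where "cells = cell_cards R"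
  obtain S \<sigma>1 \<sigma>2 where S: "mset S = mset (enc_cards X 2 m)"
    and \<sigma>1: "\<sigma>1 permutes {..<p}" and \<sigma>2: "\<sigma>2 permutes {..<p}"
    and e: "e = rearr (permute_list \<sigma>1 row1) cells
                   (permute_list \<sigma>1 (take i S @ [Enc X 1] @ drop i (take (p - 1) S)))
                 @ drop (p - 1) S"
    and L': "L' = put_back L (ord R)
                 (rearr
                    (permute_list \<sigma>2 (rearr (permute_list \<sigma>1 row1) cells (permute_list \<sigma>1 row2)))
                    (hlp_cards p)
                    (permute_list \<sigma>2 (rearr (permute_list \<sigma>1 row1) cells (permute_list \<sigma>1 row1))))"
    using conv unfolding convert_def Let_def perms_def p_def i_def row1_def row2_def cells_def
    by blast
  have len1: "length row1 = p"
    using mset_eq_length[OF cards] by (simp add: row1_def p_def)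
  have row1: "distinct row1" "set cells = set row1"
    using mset_eq_imp_distinct_iff[OF cards] mset_eq_setD[OF cards] distinct_cell_cards
    by (simp_all add: row1_def cells_def)
  define \<rho> where "\<rho> = rearr_perm row1 cells"
  have \<rho>: "\<rho> permutes {..<length row1}"
    using rearr_perm_permutes[OF cards distinct_cell_cards] by (simp add: \<rho>_def row1_def cells_def)
  have rearr_\<rho>: "rearr row1 cells row = permute_list \<rho> row" if "length row = length row1" for row
    using rearr_eq_permute_list[OF cards] that by (simp add: \<rho>_def row1_def cells_def)
  have "L' = put_back L (ord R)
              (rearr (permute_list \<sigma>2 (permute_list \<rho> row2)) row2
                 (permute_list \<sigma>2 (permute_list \<rho> row1)))"
    using L' \<sigma>1 row1 len1 by (simp add: rearr_permute_list rearr_\<rho> row2_def)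
  also have "\<dots> = L"
    using \<sigma>2 \<rho> len1 distinct_hlp_cards
    by (simp add: rearr_permute_list rearr_same row2_def row1_def put_back_map_self)
  finally have "L' = L" .
  moreover have "length (take i S @ [Enc X 1] @ drop i (take (p - 1) S)) = p"
    using idx_less[OF c] mset_eq_length[OF S] len1 m
    by (simp add: i_def row1_def p_def enc_cards_def del: upt_Suc)
  then have "e = rearr row1 cells (take i S @ [Enc X 1] @ drop i (take (p - 1) S)) @ drop (p - 1) S"
    using e \<sigma>1 row1 len1 by (simp add: rearr_permute_list)
  ultimately show ?thesis
    using that S by (simp add: p_def i_def row1_def cells_def)
qed

lemma convert_encodes:
  assumes cards: "mset (map L (ord R)) = mset (cell_cards R)" and c: "c \<in> set (ord R)"
    and v: "L c = CellC R v" and m: "card R \<le> m"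
    and conv: "(e, L') \<in> convert ord R c m X L"
  shows "L' = L \<and> encodes X m v e"
proof -
  define p where "p = card R"
  define i where "i = idx (ord R) c"
  define row1 where "row1 = map L (ord R)"
  define cells where "cells = cell_cards R"
  obtain S where S: "mset S = mset (enc_cards X 2 m)" and "L' = L"
    and e: "e = rearr row1 cells (take i S @ [Enc X 1] @ drop i (take (p - 1) S)) @ drop (p - 1) S"
    using convert_unshuffled[OF cards c m conv] unfolding p_def i_def row1_def cells_def .
  define row3 where "row3 = take i S @ [Enc X 1] @ drop i (take (p - 1) S)"
  have len1: "length row1 = p"
    using mset_eq_length[OF cards] by (simp add: row1_def p_def)
  have i: "i < p" "row1 ! i = L c"
    using idx_less[OF c] nth_idx[OF c] len1 by (simp_all add: i_def row1_def)
  have lenS: "length S = m - 1"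
    using mset_eq_length[OF S] by (simp add: enc_cards_def del: upt_Suc)
  have row1: "distinct row1" "set cells = set row1"
    using mset_eq_imp_distinct_iff[OF cards] mset_eq_setD[OF cards] distinct_cell_cards
    by (simp_all add: row1_def cells_def)
  have "CellC R v \<in> set cells"
    using i row1(2) v by (metis len1 nth_mem)
  then have v_range: "0 < v" "v \<le> p"
    by (auto simp: cells_def set_cell_cards p_def)
  have len3: "length row3 = p"
    using i lenS m by (simp add: row3_def p_def)
  have e3: "e = rearr row1 cells row3 @ drop (p - 1) S"
    unfolding row3_def by (fact e)
  have "mset e = mset row3 + mset (drop (p - 1) S)"
    using mset_rearr[OF cards distinct_cell_cards] len1 len3 by (simp add: e3 row1_def cells_def)
  also have "mset row3 = add_mset (Enc X 1) (mset (take (p - 1) S))"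
    unfolding row3_def using i by (intro mset_take_insert_drop) simp
  also have "add_mset (Enc X 1) (mset (take (p - 1) S)) + mset (drop (p - 1) S)
      = add_mset (Enc X 1) (mset S)"
    by (metis append_take_drop_id mset_append union_mset_add_mset_left)
  also have "\<dots> = mset (enc_cards X 1 m)"
    using S v_range m enc_cards_1[of m X] by (simp add: p_def)
  finally have mset_e: "mset e = mset (enc_cards X 1 m)" .
  have "idx row1 (cells ! (v - 1)) = i"
    using v_range v i row1(1) len1 idx_nth[of row1 i] by (simp add: cells_def nth_cell_cards p_def)
  then have "e ! (v - 1) = Enc X 1"
    using v_range i lenS m by (auto simp: e3 rearr_nth cells_def p_def row3_def nth_append)
  with mset_e v_range m \<open>L' = L\<close> show ?thesis
    by (simp add: encodes_def p_def)
qed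

lemma shuffled_encodings_differ:
  assumes e1: "encodes X m v e1" and e2: "encodes Y m w e2" and "v \<noteq> w"
    and \<tau>: "\<tau> permutes {..<m}"
  shows "permute_list \<tau> e2 ! idx (permute_list \<tau> e1) (Enc X 1) \<noteq> Enc Y 1"
proof -
  define i where "i = idx (permute_list \<tau> e1) (Enc X 1)"
  have len: "length e1 = m" "length e2 = m"
    using e1 e2 by (simp_all add: encodes_length)
  have "v - 1 < m" "e1 ! (v - 1) = Enc X 1"
    using e1 by (auto simp: encodes_def)
  then have "Enc X 1 \<in> set (permute_list \<tau> e1)"
    using \<tau> len by (metis nth_mem set_permute_list)
  then have i: "i < m" "e1 ! \<tau> i = Enc X 1"
    using idx_less nth_idx \<tau> len by (fastforce simp: i_def permute_list_nth)+
  have \<tau>i: "\<tau> i < m"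
    using permutes_in_image[OF \<tau>] i(1) by simp
  then have "\<tau> i = v - 1"
    using encodes_nth_eq_first[OF e1 \<tau>i, of X] i(2) by simp
  moreover have "v - 1 \<noteq> w - 1"
    using e1 e2 \<open>v \<noteq> w\<close> by (auto simp: encodes_def)
  ultimately show ?thesis
    using encodes_nth_eq_first[OF e2 \<tau>i] i len \<tau> by (simp add: i_def permute_list_nth)
qed

text \<open>After a common cyclic shift, the window of the arrow check starts at position \<open>v - 1\<close> of
  the unshifted sequences; if \<open>v + j \<le> n\<close> it does not wrap around, so it cannot meet the
  first card of an encoding of a smaller number.\<close>
lemma rotated_window_avoids_first:
  assumes e1: "encodes X n v e1" and e: "encodes Y n w e" and "w < v" and "v + j \<le> n"
  shows "rotate r e ! ((idx (rotate r e1) (Enc X 1) + j) mod n) \<noteq> Enc Z 1"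
proof -
  define i where "i = idx (rotate r e1) (Enc X 1)"
  have len: "length e1 = n" "length e = n"
    using e1 e by (simp_all add: encodes_length)
  have v: "0 < v" "v - 1 < n" "e1 ! (v - 1) = Enc X 1"
    using e1 by (auto simp: encodes_def)
  then have "Enc X 1 \<in> set (rotate r e1)"
    using len by (metis nth_mem set_rotate)
  then have i: "i < n" "e1 ! ((r + i) mod n) = Enc X 1"
    using idx_less nth_idx len by (fastforce simp: i_def nth_rotate)+
  have "(r + i) mod n = v - 1"
    using encodes_nth_eq_first[OF e1, of "(r + i) mod n" X] i by simp
  have "(r + (i + j) mod n) mod n = ((r + i) mod n + j) mod n"
    by (simp add: mod_add_right_eq mod_add_left_eq add.assoc)
  also have "\<dots> = v - 1 + j"
    using \<open>(r + i) mod n = v - 1\<close> \<open>v + j \<le> n\<close> v(1) by simp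
  finally have "rotate r e ! ((i + j) mod n) = e ! (v - 1 + j)"
    using i(1) len by (simp add: nth_rotate)
  moreover have "v - 1 + j < n" "v - 1 + j \<noteq> w - 1"
    using \<open>v + j \<le> n\<close> \<open>w < v\<close> v(1) e by (auto simp: encodes_def)
  ultimately show ?thesis
    using encodes_nth_eq_first[OF e, of "v - 1 + j" Z] by (simp add: i_def)
qed

locale room_numbering =
  fixes rooms :: "pos set set" and ord :: "pos set \<Rightarrow> pos list" and sol :: "pos \<Rightarrow> nat"
  assumes rooms_disjoint: "\<And>R R'. R \<in> rooms \<Longrightarrow> R' \<in> rooms \<Longrightarrow> R \<noteq> R' \<Longrightarrow> R \<inter> R' = {}"
    and ord_enumerates: "\<And>R. R \<in> rooms \<Longrightarrow> distinct (ord R) \<and> set (ord R) = R"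
    and room_numbers: "\<And>R. R \<in> rooms \<Longrightarrow> sol ` R = {1..card R}"
begin

abbreviation L0 :: layout where
  "L0 \<equiv> setup_layout rooms sol"

lemma room_of_eq: "R \<in> rooms \<Longrightarrow> c \<in> R \<Longrightarrow> room_of rooms c = R"
  unfolding room_of_def using rooms_disjoint by (rule_tac the_equality) auto

lemma mset_setup_layout_room:
  assumes R: "R \<in> rooms"
  shows "mset (map L0 (ord R)) = mset (cell_cards R)"
proof -
  have ord: "distinct (ord R)" "set (ord R) = R"
    using ord_enumerates[OF R] by auto
  have "card (sol ` R) = card R"
    using room_numbers[OF R] by simp
  then have "inj_on sol R"
    using ord by (metis List.finite_set inj_on_iff_eq_card)
  then have "distinct (map L0 (ord R))"
    using ord R by (auto simp: distinct_map inj_on_def setup_layout_def room_of_eq)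
  moreover have "set (map L0 (ord R)) = set (cell_cards R)"
    using ord R room_numbers[OF R] by (auto simp: setup_layout_def room_of_eq set_cell_cards)
  ultimately show ?thesis
    using distinct_cell_cards set_eq_iff_mset_eq_distinct by blast
qed

lemma sol_bounds:
  assumes "c \<in> \<Union>rooms"
  shows "0 < sol c \<and> sol c \<le> card (room_of rooms c)"
proof -
  obtain R where R: "R \<in> rooms" "c \<in> R"
    using assms by blast
  then have "sol c \<in> {1..card R}"
    using room_numbers by blast
  then show ?thesis
    using room_of_eq[OF R] by simp
qed

lemma convert_setup_layout:
  assumes c: "c \<in> \<Union>rooms" and m: "card (room_of rooms c) \<le> m"
    and conv: "(e, L') \<in> convert ord (room_of rooms c) c m X L0"
  shows "L' = L0 \<and> encodes X m (sol c) e"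
proof -
  obtain R where R: "R \<in> rooms" "c \<in> R"
    using c by blast
  show ?thesis
    using convert_encodes[where L = L0 and ord = ord and R = R and v = "sol c",
        OF mset_setup_layout_room[OF R(1)]] ord_enumerates[OF R(1)] R m conv
    by (simp add: room_of_eq setup_layout_def)
qed

lemma room_check_setup_layout: "R \<in> rooms \<Longrightarrow> room_check ord R L0 \<subseteq> {Some L0}"
  by (rule room_check_accepts[OF mset_setup_layout_room])

lemma neighbor_check_setup_layout:
  assumes c: "c1 \<in> \<Union>rooms" "c2 \<in> \<Union>rooms" and ne: "sol c1 \<noteq> sol c2"
  shows "neighbor_check rooms ord (c1, c2) L0 \<subseteq> {Some L0}"
proof
  define m where "m = max (card (room_of rooms c1)) (card (room_of rooms c2))"
  fix x assume "x \<in> neighbor_check rooms ord (c1, c2) L0"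
  then obtain e1 L1 e2 L2 \<tau> where conv1: "(e1, L1) \<in> convert ord (room_of rooms c1) c1 m LA L0"
    and conv2: "(e2, L2) \<in> convert ord (room_of rooms c2) c2 m LB L1"
    and \<tau>: "\<tau> permutes {..<m}"
    and x: "x \<in> (if permute_list \<tau> e2 ! idx (permute_list \<tau> e1) (Enc LA 1) = Enc LB 1
                  then {None} else {Some L2})"
    unfolding neighbor_check_def Let_def m_def perms_def by fastforce
  have e1: "L1 = L0" "encodes LA m (sol c1) e1"
    using convert_setup_layout[OF c(1) _ conv1] by (simp_all add: m_def)
  have e2: "L2 = L0" "encodes LB m (sol c2) e2"
    using convert_setup_layout[OF c(2) _ conv2[unfolded e1(1)]] by (simp_all add: m_def)
  show "x \<in> {Some L0}"
    using x shuffled_encodings_differ[OF e1(2) e2(2) ne \<tau>] e2(1) by simp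
qed

lemma convert_list_setup_layout:
  "\<forall>(c, X) \<in> set cs. c \<in> \<Union>rooms \<and> card (room_of rooms c) \<le> n \<Longrightarrow>
   (es, L') \<in> convert_list rooms ord n cs L0 \<Longrightarrow>
   L' = L0 \<and> (\<forall>e \<in> set es. \<exists>(c, X) \<in> set cs. encodes X n (sol c) e)"
proof (induction cs arbitrary: es L')
  case (Cons cX cs)
  obtain c X where cX: "cX = (c, X)"
    by fastforce
  from Cons.prems(2) obtain e L1 es' where conv: "(e, L1) \<in> convert ord (room_of rooms c) c n X L0"
    and convs: "(es', L') \<in> convert_list rooms ord n cs L1" and es: "es = e # es'"
    unfolding cX by auto
  have "L1 = L0" "encodes X n (sol c) e"
    using convert_setup_layout[OF _ _ conv] Cons.prems(1) cX by auto
  with Cons.IH[of es' L'] Cons.prems(1) convs es cX show ?case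
    by auto
qed simp

lemma arrow_check_setup_layout:
  assumes t: "arrow b \<in> \<Union>rooms"
    and others: "\<And>c. c \<in> set (oth b) \<Longrightarrow> c \<in> \<Union>rooms \<and> sol c < sol (arrow b)"
  shows "arrow_check rooms ord arrow oth b L0 \<subseteq> {Some L0}"
proof
  define cs where "cs = zip (oth b) [LB, LC, LD]"
  define m where "m = Max ((\<lambda>c. card (room_of rooms c)) ` set (arrow b # oth b))"
  define n where "n = 2 * m - 1"
  fix x assume "x \<in> arrow_check rooms ord arrow oth b L0"
  then obtain e1 L1 es L2 r
    where conv: "(e1, L1) \<in> convert ord (room_of rooms (arrow b)) (arrow b) n LA L0"
    and convs: "(es, L2) \<in> convert_list rooms ord n cs L1"
    and x: "x \<in> (if \<exists>f\<in>set (map (rotate r) es). \<exists>j<m.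
                    f ! ((idx (rotate r e1) (Enc LA 1) + j) mod n) \<in> {Enc LB 1, Enc LC 1, Enc LD 1}
                  then {None} else {Some L2})"
    unfolding arrow_check_def Let_def cs_def m_def n_def by fastforce
  have room_le: "card (room_of rooms c) \<le> m" if "c \<in> set (arrow b # oth b)" for c
    unfolding m_def using that by (intro Max_ge) auto
  have v: "0 < sol (arrow b)" "sol (arrow b) \<le> m"
    using sol_bounds[OF t] room_le[of "arrow b"] by auto
  then have "m \<le> n"
    by (simp add: n_def)
  have e1: "L1 = L0" "encodes LA n (sol (arrow b)) e1"
    using convert_setup_layout[OF t _ conv] room_le[of "arrow b"] \<open>m \<le> n\<close> by auto
  have "\<forall>(c, X) \<in> set cs. c \<in> \<Union>rooms \<and> card (room_of rooms c) \<le> n"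
    using others room_le \<open>m \<le> n\<close> by (fastforce simp: cs_def dest: set_zip_leftD)
  from convert_list_setup_layout[OF this convs[unfolded e1(1)]]
  have es: "L2 = L0" "\<forall>e \<in> set es. \<exists>(c, X) \<in> set cs. encodes X n (sol c) e"
    by auto
  have "rotate r e ! ((idx (rotate r e1) (Enc LA 1) + j) mod n) \<noteq> Enc Z 1"
    if "e \<in> set es" "j < m" for e j Z
  proof -
    obtain c X where cX: "(c, X) \<in> set cs" and e: "encodes X n (sol c) e"
      using es(2) \<open>e \<in> set es\<close> by blast
    have "c \<in> set (oth b)"
      using cX unfolding cs_def by (rule set_zip_leftD)
    then have "sol c < sol (arrow b)"
      using others by blast
    moreover have "sol (arrow b) + j \<le> n"
      using v \<open>j < m\<close> by (simp add: n_def)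
    ultimately show ?thesis
      by (rule rotated_window_avoids_first[OF e1(2) e])
  qed
  then have "\<not> (\<exists>f\<in>set (map (rotate r) es). \<exists>j<m.
      f ! ((idx (rotate r e1) (Enc LA 1) + j) mod n) \<in> {Enc LB 1, Enc LC 1, Enc LD 1})"
    by auto
  then show "x \<in> {Some L0}"
    using x es(1) by (simp only: if_not_P if_False singleton_iff)
qed

lemma neighbor_checks_setup_layout:
  assumes "\<And>c1 c2. (c1, c2) \<in> set np \<Longrightarrow> c1 \<in> \<Union>rooms \<and> c2 \<in> \<Union>rooms \<and> sol c1 \<noteq> sol c2"
  shows "run_seq (neighbor_check rooms ord) np L0 \<subseteq> {Some L0}"
proof (rule run_seq_stationary)
  fix cc assume "cc \<in> set np"
  moreover obtain c1 c2 where "cc = (c1, c2)"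
    by (cases cc)
  ultimately show "neighbor_check rooms ord cc L0 \<subseteq> {Some L0}"
    using assms neighbor_check_setup_layout by blast
qed

lemma arrow_checks_setup_layout:
  assumes "\<And>b. b \<in> set bl \<Longrightarrow> arrow b \<in> \<Union>rooms"
    and "\<And>b c. b \<in> set bl \<Longrightarrow> c \<in> set (oth b) \<Longrightarrow> c \<in> \<Union>rooms \<and> sol c < sol (arrow b)"
  shows "run_seq (arrow_check rooms ord arrow oth) bl L0 \<subseteq> {Some L0}"
  using assms arrow_check_setup_layout by (intro run_seq_stationary) blast

end

lemma makaro_room_numbering:
  assumes "makaro_puzzle nr nc W Bk rooms given arrow"
    and "makaro_solution W Bk rooms given arrow sol"
    and "\<forall>R\<in>rooms. distinct (ord R) \<and> set (ord R) = R"
  shows "room_numbering rooms ord sol"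
  using assms by unfold_locales (auto simp: makaro_puzzle_def makaro_solution_def)

lemma protocol_stationary:
  assumes "run_seq (room_check ord) rl L \<subseteq> {Some L}"
    and "run_seq (neighbor_check rooms ord) np L \<subseteq> {Some L}"
    and "run_seq (arrow_check rooms ord arrow oth) bl L \<subseteq> {Some L}"
  shows "protocol rooms arrow ord oth rl np bl L \<subseteq> {Some L}"
  using assms unfolding protocol_def by (fastforce split: option.splits)

theorem lemma1:
  fixes nr nc :: nat and W Bk :: "pos set" and rooms :: "pos set set"
    and given :: "pos \<Rightarrow> nat option" and arrow :: "pos \<Rightarrow> pos" and sol :: "pos \<Rightarrow> nat"
    and ord :: "pos set \<Rightarrow> pos list" and oth :: "pos \<Rightarrow> pos list"
    and rl :: "pos set list" and np :: "(pos \<times> pos) list" and bl :: "pos list"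
  assumes puzzle: "makaro_puzzle nr nc W Bk rooms given arrow"
    and solution: "makaro_solution W Bk rooms given arrow sol"
    and ord_ok: "\<forall>R\<in>rooms. distinct (ord R) \<and> set (ord R) = R"
    and oth_ok: "\<forall>b\<in>Bk. distinct (oth b) \<and> set (oth b) = {c \<in> W. adj b c \<and> c \<noteq> arrow b}"
    and rl_ok: "distinct rl \<and> set rl = rooms"
    and bl_ok: "distinct bl \<and> set bl = Bk"
    and np_ok: "distinct np \<and>
      (\<forall>(c1, c2) \<in> set np. c1 \<in> W \<and> c2 \<in> W \<and> adj c1 c2 \<and> \<not> same_room rooms c1 c2) \<and>
      (\<forall>c1\<in>W. \<forall>c2\<in>W. adj c1 c2 \<and> \<not> same_room rooms c1 c2 \<longrightarrow>
         ((c1, c2) \<in> set np \<longleftrightarrow> (c2, c1) \<notin> set np))"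
  shows "None \<notin> protocol rooms arrow ord oth rl np bl (setup_layout rooms sol)"
proof -
  interpret room_numbering rooms ord sol
    using puzzle solution ord_ok by (rule makaro_room_numbering)
  have W: "\<Union>rooms = W" and arrow_W: "\<forall>b\<in>Bk. arrow b \<in> W \<and> adj b (arrow b)"
    using puzzle unfolding makaro_puzzle_def by auto
  have neighbors: "\<forall>c\<in>W. \<forall>c'\<in>W. adj c c' \<and> \<not> same_room rooms c c' \<longrightarrow> sol c \<noteq> sol c'"
    and arrows: "\<forall>b\<in>Bk. \<forall>c\<in>W. adj b c \<and> c \<noteq> arrow b \<longrightarrow> sol c < sol (arrow b)"
    using solution unfolding makaro_solution_def by auto
  have "run_seq (room_check ord) rl L0 \<subseteq> {Some L0}"
    using rl_ok room_check_setup_layout by (intro run_seq_stationary) auto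
  moreover have "run_seq (neighbor_check rooms ord) np L0 \<subseteq> {Some L0}"
  proof (rule neighbor_checks_setup_layout)
    fix c1 c2 assume "(c1, c2) \<in> set np"
    then have "c1 \<in> W" "c2 \<in> W" "adj c1 c2" "\<not> same_room rooms c1 c2"
      using np_ok by auto
    then show "c1 \<in> \<Union>rooms \<and> c2 \<in> \<Union>rooms \<and> sol c1 \<noteq> sol c2"
      using neighbors W by blast
  qed
  moreover have "run_seq (arrow_check rooms ord arrow oth) bl L0 \<subseteq> {Some L0}"
  proof (rule arrow_checks_setup_layout)
    fix b assume "b \<in> set bl"
    then show "arrow b \<in> \<Union>rooms"
      using bl_ok arrow_W W by auto
  next
    fix b c assume "b \<in> set bl" "c \<in> set (oth b)"
    then have "b \<in> Bk" "c \<in> W" "adj b c" "c \<noteq> arrow b"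
      using bl_ok oth_ok by auto
    then show "c \<in> \<Union>rooms \<and> sol c < sol (arrow b)"
      using arrows W by blast
  qed
  ultimately show ?thesis
    using protocol_stationary by blast
qed

end
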